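(* Under the setup in the context, assume in addition that $S_0$ is nonsingular. Then the sines of the $L$ principal angles between $\mathcal R(F_0)$ and $\mathcal R(AW_j)$ (which equals $A\mathbb K_j(A,F_0)$ when no replacement of dependent Arnoldi vectors has occurred) are the singular values of the product $Q_j^{(21)}Q_{j-1}^{(21)}\cdots Q_1^{(21)}$.
   Context: Let $n,L\ge1$, $A\in\mathbb C^{n\times n}$, $B,X_0\in\mathbb C^{n\times L}$, $F_0=B-AX_0$, and let $F_0=V_1S_0$ be a reduced QR factorization ($V_1\in\mathbb C^{n\times L}$ with orthonormal columns, $S_0\in\mathbb C^{L\times L}$ upper triangular). Fix $j\ge1$. The block Arnoldi process (possibly with dependent basis vectors replaced by new orthonormal vectors) yields $W_k=[V_1,\dots,V_k]\in\mathbb C^{n\times kL}$ ($k\le j+1$) with orthonormal columns, $V_i\in\mathbb C^{n\times L}$, and the block Arnoldi relation $AW_j=W_{j+1}\bar H_j$, where $\bar H_j=(H_{ik})\in\mathbb C^{(j+1)L\times jL}$ has $L\times L$ blocks $H_{ik}$, is block upper Hessenberg ($H_{ik}=0$ for $i>k+1$), and each $H_{k+1,k}$ is upper triangular. For $k\le j$, $\bar H_k$ denotes the leading $(k+1)L\times kL$ submatrix of $\bar H_j$. $\mathbb K_j(A,F_0)$ is the span of all columns of $F_0,AF_0,\dots,A^{j-1}F_0$. Block QR factorization: assume $\bar H_j$ has full column rank. There are unitary matrices $\Omega_i=\begin{bmatrix}Q_i^{(11)}&Q_i^{(12)}\\Q_i^{(21)}&Q_i^{(22)}\end{bmatrix}\in\mathbb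 C^{2L\times 2L}$ ($i=1,\dots,j$, all four blocks $L\times L$); for $m\ge i+1$ put $Q_i^{(m)}=\mathrm{diag}(I_{(i-1)L},\Omega_i,I_{(m-i-1)L})\in\mathbb C^{mL\times mL}$ and $\bar Q_k=Q_k^{(k+1)}Q_{k-1}^{(k+1)}\cdots Q_1^{(k+1)}$. The $\Omega_i$ are chosen recursively so that $\bar Q_k\bar H_k=\begin{bmatrix}R_k\\ 0_{L\times kL}\end{bmatrix}$ with $R_k\in\mathbb C^{kL\times kL}$ upper triangular and nonsingular ($k=1,\dots,j$). Principal angles: for subspaces $\mathcal U,\mathcal W$ of $\mathbb C^n$ with $\dim\mathcal U=p\le\dim\mathcal W$ and matrices $U,W$ with orthonormal columns spanning them, the $p$ principal angles $\theta_1,\dots,\theta_p\in[0,\pi/2]$ are defined by: $\cos\theta_1,\dots,\cos\theta_p$ are the singular values of $W^*U$. $\mathcal R(\cdot)$ denotes column space. *)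

theory Defs
  imports "Jordan_Normal_Form.Schur_Decomposition" "Jordan_Normal_Form.Char_Poly"
begin

definition subm :: "'a mat \<Rightarrow> nat \<Rightarrow> nat \<Rightarrow> nat \<Rightarrow> nat \<Rightarrow> 'a mat" where
  "subm M r0 c0 nr nc = mat nr nc (\<lambda>(r,c). M $$ (r0 + r, c0 + c))"

definition orthonormal_cols :: "complex mat \<Rightarrow> bool" where
  "orthonormal_cols U \<longleftrightarrow> mat_adjoint U * U = 1\<^sub>m (dim_col U)"

definition unitary_mat :: "complex mat \<Rightarrow> bool" where
  "unitary_mat U \<longleftrightarrow> mat_adjoint U * U = 1\<^sub>m (dim_col U) \<and> U * mat_adjoint U = 1\<^sub>m (dim_row U)"

definition col_space :: "complex mat \<Rightarrow> complex vec set" where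
  "col_space M = {M *\<^sub>v v | v. v \<in> carrier_vec (dim_col M)}"

definition singular_values :: "complex mat \<Rightarrow> real multiset" where
  "singular_values M = image_mset (\<lambda>z. sqrt (Re z)) (proots (char_poly (mat_adjoint M * M)))"

(* principal angles between R(U) and R(W), U, W with orthonormal columns,
   dim R(U) <= dim R(W): cosines are the singular values of W^* U *)
definition principal_angles :: "complex mat \<Rightarrow> complex mat \<Rightarrow> real multiset" where
  "principal_angles U W = image_mset arccos (singular_values (mat_adjoint W * U))"

(* Q_i^{(m)} = diag(I_{(i-1)L}, Omega_i, I_{(m-i-1)L}) *)
definition embed_rot :: "nat \<Rightarrow> nat \<Rightarrow> nat \<Rightarrow> complex mat \<Rightarrow> complex mat" where
  "embed_rot L m i Om = mat (m*L) (m*L) (\<lambda>(r,c).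
     if (i-1)*L \<le> r \<and> r < (i+1)*L \<and> (i-1)*L \<le> c \<and> c < (i+1)*L
     then Om $$ (r - (i-1)*L, c - (i-1)*L)
     else if r = c then 1 else 0)"

(* qprod L Om m k = Q_k^{(m)} Q_{k-1}^{(m)} ... Q_1^{(m)};  Qbar_k = qprod L Om (k+1) k *)
fun qprod :: "nat \<Rightarrow> (nat \<Rightarrow> complex mat) \<Rightarrow> nat \<Rightarrow> nat \<Rightarrow> complex mat" where
  "qprod L Om m 0 = 1\<^sub>m (m*L)"
| "qprod L Om m (Suc k) = embed_rot L m (Suc k) (Om (Suc k)) * qprod L Om m k"

definition q21 :: "nat \<Rightarrow> complex mat \<Rightarrow> complex mat" where
  "q21 L Om = subm Om L 0 L L"

fun q21prod :: "nat \<Rightarrow> (nat \<Rightarrow> complex mat) \<Rightarrow> nat \<Rightarrow> complex mat" where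
  "q21prod L Om 0 = 1\<^sub>m L"
| "q21prod L Om (Suc k) = q21 L (Om (Suc k)) * q21prod L Om k"

end

theory Submission
  imports Defs
begin

text \<open>
  Let Q = Q_j^(j+1) ... Q_1^(j+1) and T = W Q^*. Since Q H = [R; 0] with R nonsingular, the first jL
  columns Z of T form an orthonormal basis of R(A W_j) = R(W H), and Z^* V_1 = K is the top jL x L block
  of the first block column [K; P] of the unitary Q. So the cosines of the principal angles are the
  singular values of K, and K^* K + P^* P = I turns their sines into the singular values of P.
  Each Omega_i mixes only block rows i and i + 1, hence by induction P = Q_j^(21) ... Q_1^(21).
\<close>

section \<open>Adjoints, column spaces and orthogonal projections\<close>

lemma mat_adjoint_alt:
  "mat_adjoint (A :: complex mat) = mat (dim_col A) (dim_row A) (\<lambda>(i, k). cnj (A $$ (k, i)))"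
  unfolding mat_adjoint_def by (rule eq_matI) (auto simp: mat_of_rows_index)

lemma mat_adjoint_carrier [simp]:
  "(A :: complex mat) \<in> carrier_mat a b \<Longrightarrow> mat_adjoint A \<in> carrier_mat b a"
  by (auto simp: mat_adjoint_alt)

lemma dim_mat_adjoint [simp]:
  "dim_row (mat_adjoint (A :: complex mat)) = dim_col A"
  "dim_col (mat_adjoint (A :: complex mat)) = dim_row A"
  by (auto simp: mat_adjoint_alt)

lemma index_mat_adjoint [simp]:
  "i < dim_col (A :: complex mat) \<Longrightarrow> k < dim_row A \<Longrightarrow> mat_adjoint A $$ (i, k) = cnj (A $$ (k, i))"
  by (auto simp: mat_adjoint_alt)

lemma mat_adjoint_adjoint [simp]: "mat_adjoint (mat_adjoint (A :: complex mat)) = A"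
  by (rule eq_matI) auto

lemma mat_adjoint_one [simp]: "mat_adjoint (1\<^sub>m n :: complex mat) = 1\<^sub>m n"
  by (rule eq_matI) auto

lemma mat_adjoint_mult:
  assumes "(A :: complex mat) \<in> carrier_mat a b" "B \<in> carrier_mat b c"
  shows "mat_adjoint (A * B) = mat_adjoint B * mat_adjoint A"
  using assms
  by (intro eq_matI) (auto simp: scalar_prod_def sum_conjugate[symmetric] intro!: sum.cong)

lemma index_mult_mat_sum:
  assumes "(A :: complex mat) \<in> carrier_mat p q" "B \<in> carrier_mat q s" "r < p" "c < s"
  shows "(A * B) $$ (r, c) = (\<Sum>l<q. A $$ (r, l) * B $$ (l, c))"
  using assms by (auto simp: scalar_prod_def lessThan_atLeast0 intro!: sum.cong)

lemma index_adjoint_mult_sum: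
  assumes "(X :: complex mat) \<in> carrier_mat n a" "Y \<in> carrier_mat n b" "r < a" "c < b"
  shows "(mat_adjoint X * Y) $$ (r, c) = (\<Sum>i<n. cnj (X $$ (i, r)) * Y $$ (i, c))"
  using assms by (auto simp: scalar_prod_def lessThan_atLeast0 intro!: sum.cong)

lemma inner_prod_mult_mat_vec:
  assumes A: "(A :: complex mat) \<in> carrier_mat a b" and v: "v \<in> carrier_vec b" and x: "x \<in> carrier_vec a"
  shows "(A *\<^sub>v v) \<bullet>c x = v \<bullet>c (mat_adjoint A *\<^sub>v x)"
proof -
  have "(A *\<^sub>v v) \<bullet>c x = (\<Sum>i<a. (\<Sum>l<b. A $$ (i, l) * v $ l) * cnj (x $ i))"
    using A v x by (auto simp: scalar_prod_def lessThan_atLeast0 intro!: sum.cong)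
  also have "\<dots> = (\<Sum>l<b. v $ l * (\<Sum>i<a. cnj (cnj (A $$ (i, l)) * x $ i)))"
    by (simp add: sum_distrib_left sum_distrib_right mult_ac sum.swap[of _ "{..<a}"])
  also have "\<dots> = v \<bullet>c (mat_adjoint A *\<^sub>v x)"
    using A v x by (auto simp: scalar_prod_def lessThan_atLeast0 sum_conjugate intro!: sum.cong)
  finally show ?thesis .
qed

lemma mult_assoc_dims:
  "dim_col (A :: complex mat) = dim_row B \<Longrightarrow> dim_col B = dim_row C \<Longrightarrow> A * B * C = A * (B * C)"
  by (rule assoc_mult_mat[of A "dim_row A" "dim_col A" B "dim_col B" C "dim_col C"]) auto

lemma orthonormal_colsD:
  "orthonormal_cols (Y :: complex mat) \<Longrightarrow> Y \<in> carrier_mat n k \<Longrightarrow> mat_adjoint Y * Y = 1\<^sub>m k"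
  unfolding orthonormal_cols_def by auto

definition mat_trace :: "complex mat \<Rightarrow> complex" where
  "mat_trace A = (\<Sum>i<dim_row A. A $$ (i, i))"

lemma mat_trace_mult_comm:
  assumes "(A :: complex mat) \<in> carrier_mat a b" "B \<in> carrier_mat b a"
  shows "mat_trace (A * B) = mat_trace (B * A)"
proof -
  have "mat_trace (A * B) = (\<Sum>i<a. \<Sum>l<b. A $$ (i, l) * B $$ (l, i))"
    using assms by (auto simp: mat_trace_def scalar_prod_def lessThan_atLeast0 intro!: sum.cong)
  also have "\<dots> = (\<Sum>l<b. \<Sum>i<a. B $$ (l, i) * A $$ (i, l))"
    by (subst sum.swap) (simp add: mult_ac)
  also have "\<dots> = mat_trace (B * A)"
    using assms by (auto simp: mat_trace_def scalar_prod_def lessThan_atLeast0 intro!: sum.cong)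
  finally show ?thesis .
qed

lemma dim_eq_if_adjoint_inverse:
  assumes "(G :: complex mat) \<in> carrier_mat a b" "mat_adjoint G * G = 1\<^sub>m b" "G * mat_adjoint G = 1\<^sub>m a"
  shows "a = b"
proof -
  have "mat_trace (mat_adjoint G * G) = mat_trace (G * mat_adjoint G)"
    using assms by (intro mat_trace_mult_comm) auto
  then show ?thesis
    using assms by (simp add: mat_trace_def)
qed

lemma col_mem_col_space: "(Z :: complex mat) \<in> carrier_mat n m \<Longrightarrow> c < m \<Longrightarrow> col Z c \<in> col_space Z"
  unfolding col_space_def by (intro CollectI exI[of _ "unit_vec m c"]) (auto simp: mult_mat_vec_def)

lemma orthonormal_proj_mult_vec:
  assumes Y: "(Y :: complex mat) \<in> carrier_mat n k" "orthonormal_cols Y" and x: "x \<in> col_space Y"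
  shows "Y *\<^sub>v (mat_adjoint Y *\<^sub>v x) = x"
proof -
  from x obtain v where v: "v \<in> carrier_vec k" and xv: "x = Y *\<^sub>v v"
    using Y unfolding col_space_def by auto
  have "mat_adjoint Y *\<^sub>v x = (mat_adjoint Y * Y) *\<^sub>v v"
    using Y v xv by (simp add: assoc_mult_mat_vec[of _ k n _ k])
  also have "\<dots> = v"
    using orthonormal_colsD[OF Y(2,1)] v by simp
  finally show ?thesis
    using xv by simp
qed

lemma orthonormal_proj_mult:
  assumes Y: "(Y :: complex mat) \<in> carrier_mat n k" "orthonormal_cols Y"
    and Z: "Z \<in> carrier_mat n m" and sub: "col_space Z \<subseteq> col_space Y"
  shows "Y * (mat_adjoint Y * Z) = Z"
proof (rule mat_col_eqI)
  fix c assume c: "c < dim_col Z"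
  have "col (Y * (mat_adjoint Y * Z)) c = Y *\<^sub>v col (mat_adjoint Y * Z) c"
    using Y Z c by (intro col_mult2[of _ n k _ m]) auto
  also have "\<dots> = Y *\<^sub>v (mat_adjoint Y *\<^sub>v col Z c)"
    using Y Z c by (subst col_mult2[of _ k n _ m]) auto
  also have "\<dots> = col Z c"
    using orthonormal_proj_mult_vec[OF Y] col_mem_col_space[OF Z] sub c Z by auto
  finally show "col (Y * (mat_adjoint Y * Z)) c = col Z c" .
qed (use Y Z in auto)

lemma orthonormal_proj_eq:
  assumes Y: "(Y :: complex mat) \<in> carrier_mat n k" "orthonormal_cols Y"
    and Z: "Z \<in> carrier_mat n m" "orthonormal_cols Z" and eq: "col_space Y = col_space Z"
  shows "Y * mat_adjoint Y = Z * mat_adjoint Z"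
proof -
  have YZ: "Y * (mat_adjoint Y * Z) = Z" and ZY: "Z * (mat_adjoint Z * Y) = Y"
    using orthonormal_proj_mult[OF Y Z(1)] orthonormal_proj_mult[OF Z Y(1)] eq by auto
  have "mat_adjoint (Y * (mat_adjoint Y * Z)) = mat_adjoint (mat_adjoint Y * Z) * mat_adjoint Y"
    using Y Z by (intro mat_adjoint_mult[of _ n k _ m]) auto
  also have "mat_adjoint (mat_adjoint Y * Z) = mat_adjoint Z * Y"
    using Y Z mat_adjoint_mult[of "mat_adjoint Y" k n Z m] by auto
  finally have "mat_adjoint Z * Y * mat_adjoint Y = mat_adjoint (Y * (mat_adjoint Y * Z))"
    by simp
  also have "\<dots> = mat_adjoint Z"
    using YZ by simp
  finally have "mat_adjoint Z * Y * mat_adjoint Y = mat_adjoint Z" .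
  moreover have "Y * mat_adjoint Y = Z * (mat_adjoint Z * Y * mat_adjoint Y)"
    using Y Z by (subst ZY[symmetric]) (simp add: mult_assoc_dims)
  ultimately show ?thesis
    by simp
qed

lemma col_space_mult_invertible:
  assumes A: "(A :: complex mat) \<in> carrier_mat n k" and S: "S \<in> carrier_mat k k" and d: "det S \<noteq> 0"
  shows "col_space (A * S) = col_space A"
proof
  from det_non_zero_imp_unit[OF S d, of undefined]
  obtain S' where S': "S' \<in> carrier_mat k k" and SS': "S * S' = 1\<^sub>m k"
    unfolding Units_def ring_mat_def by auto
  show "col_space A \<subseteq> col_space (A * S)"
  proof
    fix x assume "x \<in> col_space A"
    then obtain v where v: "v \<in> carrier_vec k" and x: "x = A *\<^sub>v v"
      using A unfolding col_space_def by auto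
    have "(A * S) *\<^sub>v (S' *\<^sub>v v) = A *\<^sub>v ((S * S') *\<^sub>v v)"
      using A S S' v by (simp add: assoc_mult_mat_vec[of _ k k _ k])
    then have "x = (A * S) *\<^sub>v (S' *\<^sub>v v)"
      using x SS' v by auto
    then show "x \<in> col_space (A * S)"
      using S S' v unfolding col_space_def by (intro CollectI exI[of _ "S' *\<^sub>v v"]) auto
  qed
qed (use A S in \<open>auto simp: col_space_def\<close>)

section \<open>Spectra of Gram matrices and principal angles\<close>

lemma proots_prod_linear: "proots (\<Prod>a\<leftarrow>xs. [:- a, 1:]) = mset (xs :: complex list)"
proof (induction xs)
  case (Cons x xs)
  have "(\<Prod>a\<leftarrow>xs. [:- a, 1::complex:]) \<noteq> 0"
    by (auto simp: prod_list_zero_iff)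
  then have "proots ([:- x, 1:] * (\<Prod>a\<leftarrow>xs. [:- a, 1:])) = {#x#} + proots (\<Prod>a\<leftarrow>xs. [:- a, 1:])"
    by (subst proots_mult) simp_all
  then show ?case
    using Cons by simp
qed simp

lemma mem_proots_char_poly_iff_eigenvalue:
  assumes A: "(A :: complex mat) \<in> carrier_mat n n"
  shows "e \<in># proots (char_poly A) \<longleftrightarrow> eigenvalue A e"
proof -
  have "coeff (char_poly A) n = 1"
    using degree_monic_char_poly[OF A] by blast
  then have "char_poly A \<noteq> 0"
    by (metis coeff_0 zero_neq_one)
  then show ?thesis
    by (simp only: set_mset_def[symmetric] set_count_proots eigenvalue_root_char_poly[OF A]) simp
qed

lemma proots_char_poly_one_minus:
  assumes N: "(N :: complex mat) \<in> carrier_mat L L"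
  shows "proots (char_poly (1\<^sub>m L - N)) = image_mset (\<lambda>e. 1 - e) (proots (char_poly N))"
proof -
  obtain es where es: "char_poly N = (\<Prod>a\<leftarrow>es. [:- a, 1:])"
    using char_poly_factorized[OF N] by auto
  define T where "T = schur_upper_triangular N es"
  have T: "T \<in> carrier_mat L L" "upper_triangular T" "similar_mat N T"
    unfolding T_def by (rule schur_upper_triangular[OF N es])+
  obtain P Q where "similar_mat_wit N T P Q"
    using T(3) unfolding similar_mat_def by blast
  then have P: "P \<in> carrier_mat L L" and Q: "Q \<in> carrier_mat L L"
    and PQ: "P * Q = 1\<^sub>m L" "Q * P = 1\<^sub>m L" "N = P * T * Q"
    using similar_mat_witD2[OF N] by auto
  have "P * (1\<^sub>m L - T) * Q = P * Q - P * T * Q"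
    using P Q T(1) by (simp add: mult_minus_distrib_mat[of _ L L _ L] minus_mult_distrib_mat[of _ L L])
  then have "similar_mat (1\<^sub>m L - N) (1\<^sub>m L - T)"
    using P Q T(1) PQ by (intro similar_matI[where n = L and P = P and Q = Q]) auto
  then have "proots (char_poly (1\<^sub>m L - N)) = proots (char_poly (1\<^sub>m L - T))"
    by (rule arg_cong[OF char_poly_similar])
  also have "char_poly (1\<^sub>m L - T) = (\<Prod>a\<leftarrow>diag_mat (1\<^sub>m L - T). [:- a, 1:])"
    by (rule char_poly_upper_triangular[of _ L]) (use T(1,2) in \<open>auto simp: upper_triangular_def\<close>)
  also have "diag_mat (1\<^sub>m L - T) = map (\<lambda>e. 1 - e) (diag_mat T)"
    using T(1) by (auto simp: diag_mat_def intro!: nth_equalityI)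
  also have "proots (\<Prod>a\<leftarrow>map (\<lambda>e. 1 - e) (diag_mat T). [:- a, 1:])
      = image_mset (\<lambda>e. 1 - e) (mset (diag_mat T))"
    by (simp only: proots_prod_linear mset_map)
  also have "mset (diag_mat T) = proots (char_poly T)"
    by (simp only: char_poly_upper_triangular[OF T(1,2)] proots_prod_linear)
  also have "char_poly T = char_poly N"
    by (rule char_poly_similar[OF T(3), symmetric])
  finally show ?thesis .
qed

lemma eigenvalue_gram_nonneg:
  assumes P: "(P :: complex mat) \<in> carrier_mat m L" and ev: "eigenvalue (mat_adjoint P * P) e"
  shows "Im e = 0 \<and> 0 \<le> Re e"
proof -
  obtain v where v: "v \<in> carrier_vec L" "v \<noteq> 0\<^sub>v L" and Pv: "(mat_adjoint P * P) *\<^sub>v v = e \<cdot>\<^sub>v v"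
    using ev P unfolding eigenvalue_def eigenvector_def by auto
  have "(P *\<^sub>v v) \<bullet>c (P *\<^sub>v v) = v \<bullet>c ((mat_adjoint P * P) *\<^sub>v v)"
    using P v by (simp add: inner_prod_mult_mat_vec[of _ m L] assoc_mult_mat_vec[of _ L m _ L])
  also have "\<dots> = cnj e * (v \<bullet>c v)"
    using v by (simp add: Pv conjugate_smult_vec)
  finally have "cnj e * (v \<bullet>c v) \<ge> 0"
    by (metis conjugate_square_ge_0_vec)
  moreover have "v \<bullet>c v > 0"
    using v by simp
  ultimately show ?thesis
    by (auto simp: less_eq_complex_def less_complex_def zero_le_mult_iff)
qed

lemma sin_arccos_singular_values:
  assumes K: "(K :: complex mat) \<in> carrier_mat m L" and P: "P \<in> carrier_mat L L"
    and sum1: "mat_adjoint K * K + mat_adjoint P * P = 1\<^sub>m L"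
  shows "image_mset sin (image_mset arccos (singular_values K)) = singular_values P"
proof -
  let ?N = "mat_adjoint P * P"
  have N: "?N \<in> carrier_mat L L" and M: "mat_adjoint K * K \<in> carrier_mat L L"
    using K P by auto
  have "mat_adjoint K * K = 1\<^sub>m L - ?N"
  proof (rule eq_matI)
    fix i k assume "i < dim_row (1\<^sub>m L - ?N)" "k < dim_col (1\<^sub>m L - ?N)"
    moreover have "(mat_adjoint K * K + ?N) $$ (i, k) = 1\<^sub>m L $$ (i, k)"
      by (simp only: sum1)
    ultimately show "(mat_adjoint K * K) $$ (i, k) = (1\<^sub>m L - ?N) $$ (i, k)"
      using K P by (auto simp: algebra_simps)
  qed (use K P in auto)
  then have roots: "proots (char_poly (mat_adjoint K * K)) = image_mset (\<lambda>e. 1 - e) (proots (char_poly ?N))"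
    using proots_char_poly_one_minus[OF N] by simp
  have "sin (arccos (sqrt (Re (1 - e)))) = sqrt (Re e)" if e: "e \<in># proots (char_poly ?N)" for e
  proof -
    have "Im e = 0 \<and> 0 \<le> Re e"
      using e eigenvalue_gram_nonneg[OF P] mem_proots_char_poly_iff_eigenvalue[OF N] by blast
    moreover have "1 - e \<in># proots (char_poly (mat_adjoint K * K))"
      using e roots by simp
    then have "0 \<le> Re (1 - e)"
      using eigenvalue_gram_nonneg[OF K] mem_proots_char_poly_iff_eigenvalue[OF M] by blast
    ultimately have "0 \<le> Re e" "Re e \<le> 1"
      by auto
    then have "0 \<le> sqrt (1 - Re e)" "sqrt (1 - Re e) \<le> 1"
      by auto
    then have "sin (arccos (sqrt (1 - Re e))) = sqrt (1 - (sqrt (1 - Re e))\<^sup>2)"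
      by (intro sin_arccos) linarith+
    then show ?thesis
      using \<open>Re e \<le> 1\<close> by simp
  qed
  then show ?thesis
    unfolding singular_values_def roots image_mset.compositionality
    by (auto simp: o_def intro: image_mset_cong)
qed

lemma singular_values_adjoint_mult_col_space_cong:
  assumes U: "(U :: complex mat) \<in> carrier_mat n k" "orthonormal_cols U"
    and V: "V \<in> carrier_mat n l" "orthonormal_cols V" and UV: "col_space U = col_space V"
    and Y: "Y \<in> carrier_mat n p" "orthonormal_cols Y"
    and Z: "Z \<in> carrier_mat n q" "orthonormal_cols Z" and YZ: "col_space Y = col_space Z"
  shows "singular_values (mat_adjoint Y * U) = singular_values (mat_adjoint Z * V)"
proof -
  define G where "G = mat_adjoint V * U"
  have G: "G \<in> carrier_mat l k" and adjG: "mat_adjoint G = mat_adjoint U * V"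
    unfolding G_def using U V by (auto simp: mat_adjoint_mult[of _ l n _ k])
  have VG: "V * G = U" and UU: "U * (mat_adjoint U * V) = V"
    unfolding G_def using orthonormal_proj_mult[OF V U(1)] orthonormal_proj_mult[OF U V(1)] UV by auto
  have "mat_adjoint G * G = mat_adjoint U * (V * G)"
    using U V G by (simp add: adjG mult_assoc_dims)
  then have GG: "mat_adjoint G * G = 1\<^sub>m k"
    using VG orthonormal_colsD[OF U(2,1)] by simp
  have "G * mat_adjoint G = mat_adjoint V * (U * (mat_adjoint U * V))"
    unfolding adjG using U V by (simp add: G_def mult_assoc_dims)
  then have GG': "G * mat_adjoint G = 1\<^sub>m l"
    using UU orthonormal_colsD[OF V(2,1)] by simp
  have lk: "l = k"
    using dim_eq_if_adjoint_inverse[OF G GG GG'] .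
  have gram_Y: "mat_adjoint (mat_adjoint Y * U) * (mat_adjoint Y * U) = mat_adjoint U * (Y * mat_adjoint Y) * U"
    and gram_Z: "mat_adjoint (mat_adjoint Z * U) * (mat_adjoint Z * U) = mat_adjoint U * (Z * mat_adjoint Z) * U"
    using U Y Z by (simp_all add: mat_adjoint_mult[of _ p n _ k] mat_adjoint_mult[of _ q n _ k] mult_assoc_dims)
  define X where "X = mat_adjoint Z * V"
  have X: "X \<in> carrier_mat q l"
    unfolding X_def using Z V by auto
  have "mat_adjoint Z * U = X * G"
    unfolding X_def using Z V G by (simp add: VG[symmetric] mult_assoc_dims)
  then have "mat_adjoint (mat_adjoint Z * U) * (mat_adjoint Z * U) = mat_adjoint G * (mat_adjoint X * X) * G"
    using X G by (simp add: mat_adjoint_mult[OF X G] mult_assoc_dims)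
  then have gram: "mat_adjoint (mat_adjoint Y * U) * (mat_adjoint Y * U)
      = mat_adjoint G * (mat_adjoint X * X) * G"
    using gram_Y gram_Z orthonormal_proj_eq[OF Y Z YZ] by simp
  have "similar_mat (mat_adjoint (mat_adjoint Y * U) * (mat_adjoint Y * U))
      (mat_adjoint (mat_adjoint Z * V) * (mat_adjoint Z * V))"
    unfolding gram X_def[symmetric] using G GG GG' X lk
    by (intro similar_matI[where n = k and P = "mat_adjoint G" and Q = G]) auto
  then show ?thesis
    unfolding singular_values_def by (simp add: char_poly_similar)
qed

section \<open>Submatrices and block triangularisation\<close>

lemma subm_carrier [simp]: "subm M r0 c0 nr nc \<in> carrier_mat nr nc"
  by (simp add: subm_def)

lemma dim_subm [simp]: "dim_row (subm M r0 c0 nr nc) = nr" "dim_col (subm M r0 c0 nr nc) = nc"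
  by (simp_all add: subm_def)

lemma index_subm [simp]: "r < nr \<Longrightarrow> c < nc \<Longrightarrow> subm M r0 c0 nr nc $$ (r, c) = M $$ (r0 + r, c0 + c)"
  by (simp add: subm_def)

lemma subm_whole: "M \<in> carrier_mat a b \<Longrightarrow> subm M 0 0 a b = M"
  by (intro eq_matI) auto

lemma sum_lessThan_add:
  fixes g :: "nat \<Rightarrow> 'a :: comm_monoid_add"
  shows "(\<Sum>t<a + b. g t) = (\<Sum>t<a. g t) + (\<Sum>t<b. g (a + t))"
  by (induction b) (auto simp: add.assoc)

lemma adjoint_mult_subm:
  assumes "(X :: complex mat) \<in> carrier_mat n a" "Y \<in> carrier_mat n b" "r0 + k \<le> a" "c0 + l \<le> b"
  shows "mat_adjoint (subm X 0 r0 n k) * subm Y 0 c0 n l = subm (mat_adjoint X * Y) r0 c0 k l"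
proof (rule eq_matI)
  fix i j assume "i < dim_row (subm (mat_adjoint X * Y) r0 c0 k l)" "j < dim_col (subm (mat_adjoint X * Y) r0 c0 k l)"
  then have ij: "i < k" "j < l"
    by simp_all
  have "(mat_adjoint (subm X 0 r0 n k) * subm Y 0 c0 n l) $$ (i, j)
      = (\<Sum>t<n. cnj (X $$ (t, r0 + i)) * Y $$ (t, c0 + j))"
    using index_adjoint_mult_sum[of "subm X 0 r0 n k" n k "subm Y 0 c0 n l" l] ij by simp
  also have "\<dots> = (mat_adjoint X * Y) $$ (r0 + i, c0 + j)"
    using index_adjoint_mult_sum[OF assms(1,2)] ij assms(3,4) by simp
  finally show "(mat_adjoint (subm X 0 r0 n k) * subm Y 0 c0 n l) $$ (i, j)
      = subm (mat_adjoint X * Y) r0 c0 k l $$ (i, j)"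
    using ij by simp
qed auto

lemma orthonormal_cols_subm:
  assumes "(X :: complex mat) \<in> carrier_mat n a" "orthonormal_cols X" "c0 + k \<le> a"
  shows "orthonormal_cols (subm X 0 c0 n k)"
  unfolding orthonormal_cols_def
  using assms adjoint_mult_subm[OF assms(1,1,3,3)] orthonormal_colsD[OF assms(2,1)]
  by (auto intro!: eq_matI)

lemma orthonormal_cols_split_rows:
  assumes Q: "(Q :: complex mat) \<in> carrier_mat (m + p) N" "orthonormal_cols Q" and l: "l \<le> N"
  shows "mat_adjoint (subm Q 0 0 m l) * subm Q 0 0 m l + mat_adjoint (subm Q m 0 p l) * subm Q m 0 p l
    = 1\<^sub>m l"
proof (rule eq_matI)
  fix r c assume "r < dim_row (1\<^sub>m l)" "c < dim_col (1\<^sub>m l)"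
  then have rc: "r < l" "c < l" and rcN: "r < N" "c < N"
    using l by auto
  have "(mat_adjoint (subm Q 0 0 m l) * subm Q 0 0 m l) $$ (r, c) = (\<Sum>i<m. cnj (Q $$ (i, r)) * Q $$ (i, c))"
    using index_adjoint_mult_sum[of "subm Q 0 0 m l" m l "subm Q 0 0 m l" l] rc by simp
  moreover have "(mat_adjoint (subm Q m 0 p l) * subm Q m 0 p l) $$ (r, c)
      = (\<Sum>t<p. cnj (Q $$ (m + t, r)) * Q $$ (m + t, c))"
    using index_adjoint_mult_sum[of "subm Q m 0 p l" p l "subm Q m 0 p l" l] rc by simp
  moreover have "(\<Sum>i<m. cnj (Q $$ (i, r)) * Q $$ (i, c)) + (\<Sum>t<p. cnj (Q $$ (m + t, r)) * Q $$ (m + t, c))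
      = (mat_adjoint Q * Q) $$ (r, c)"
    using index_adjoint_mult_sum[OF Q(1) Q(1) rcN] by (simp add: sum_lessThan_add)
  ultimately show "(mat_adjoint (subm Q 0 0 m l) * subm Q 0 0 m l
      + mat_adjoint (subm Q m 0 p l) * subm Q m 0 p l) $$ (r, c) = 1\<^sub>m l $$ (r, c)"
    using rc rcN orthonormal_colsD[OF Q(2,1)] by simp
qed auto

lemma mult_subm_zero_rows:
  assumes T: "(T :: complex mat) \<in> carrier_mat n (m + p)" and M: "M \<in> carrier_mat (m + p) q"
    and zero: "subm M m 0 p q = 0\<^sub>m p q"
  shows "T * M = subm T 0 0 n m * subm M 0 0 m q"
proof (rule eq_matI)
  fix r c assume "r < dim_row (subm T 0 0 n m * subm M 0 0 m q)" "c < dim_col (subm T 0 0 n m * subm M 0 0 m q)"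
  then have rc: "r < n" "c < q"
    by auto
  have "M $$ (m + t, c) = 0" if "t < p" for t
    using that rc index_subm[of t p c q M m 0] by (simp add: zero)
  then have "(T * M) $$ (r, c) = (\<Sum>l<m. T $$ (r, l) * M $$ (l, c))"
    using index_mult_mat_sum[OF T M rc] by (simp add: sum_lessThan_add)
  also have "\<dots> = (subm T 0 0 n m * subm M 0 0 m q) $$ (r, c)"
    using index_mult_mat_sum[of "subm T 0 0 n m" n m "subm M 0 0 m q" q] rc by simp
  finally show "(T * M) $$ (r, c) = (subm T 0 0 n m * subm M 0 0 m q) $$ (r, c)" .
qed (use T M in auto)

lemma orthonormal_basis_of_block_triangularisation:
  assumes W: "(W :: complex mat) \<in> carrier_mat n (m + p)" "orthonormal_cols W"
    and Q: "Q \<in> carrier_mat (m + p) (m + p)" "mat_adjoint Q * Q = 1\<^sub>m (m + p)"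
    and H: "H \<in> carrier_mat (m + p) m"
    and zero: "subm (Q * H) m 0 p m = 0\<^sub>m p m" and R: "det (subm (Q * H) 0 0 m m) \<noteq> 0"
    and l: "l \<le> m + p"
  obtains Z where "Z \<in> carrier_mat n m" "orthonormal_cols Z" "col_space (W * H) = col_space Z"
    "mat_adjoint Z * subm W 0 0 n l = subm Q 0 0 m l"
proof -
  define T where "T = W * mat_adjoint Q"
  have T: "T \<in> carrier_mat n (m + p)"
    unfolding T_def using W Q by simp
  have adjT: "mat_adjoint T = Q * mat_adjoint W"
    unfolding T_def using mat_adjoint_mult[OF W(1) mat_adjoint_carrier[OF Q(1)]] by simp
  have QQ: "Q * mat_adjoint Q = 1\<^sub>m (m + p)"
    by (rule mat_mult_left_right_inverse[OF mat_adjoint_carrier[OF Q(1)] Q])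
  have WW: "mat_adjoint W * W = 1\<^sub>m (m + p)"
    using orthonormal_colsD[OF W(2,1)] .
  have "mat_adjoint T * T = Q * (mat_adjoint W * W) * mat_adjoint Q"
    unfolding adjT using W Q by (simp add: T_def mult_assoc_dims)
  then have oT: "orthonormal_cols T"
    unfolding orthonormal_cols_def using T Q QQ WW by simp
  have TW: "mat_adjoint T * W = Q"
    unfolding adjT using W Q WW by (simp add: mult_assoc_dims)
  have "mat_adjoint Q * (Q * H) = H"
    using Q H by (simp flip: assoc_mult_mat[OF mat_adjoint_carrier[OF Q(1)] Q(1) H])
  then have "W * H = T * (Q * H)"
    unfolding T_def using W Q H by (simp add: mult_assoc_dims)
  also have "\<dots> = subm T 0 0 n m * subm (Q * H) 0 0 m m"
    using T Q H zero by (intro mult_subm_zero_rows) auto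
  finally have WH: "W * H = subm T 0 0 n m * subm (Q * H) 0 0 m m" .
  show ?thesis
  proof (rule that[of "subm T 0 0 n m"])
    show "orthonormal_cols (subm T 0 0 n m)"
      using T oT by (intro orthonormal_cols_subm) auto
    show "col_space (W * H) = col_space (subm T 0 0 n m)"
      unfolding WH using R by (intro col_space_mult_invertible) auto
    show "mat_adjoint (subm T 0 0 n m) * subm W 0 0 n l = subm Q 0 0 m l"
      using adjoint_mult_subm[OF T W(1)] l TW by simp
  qed simp
qed

lemma sin_principal_angles_block_triangularisation:
  assumes W: "(W :: complex mat) \<in> carrier_mat n (m + L)" "orthonormal_cols W"
    and Q: "Q \<in> carrier_mat (m + L) (m + L)" "mat_adjoint Q * Q = 1\<^sub>m (m + L)"
    and H: "H \<in> carrier_mat (m + L) m"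
    and zero: "subm (Q * H) m 0 L m = 0\<^sub>m L m" and R: "det (subm (Q * H) 0 0 m m) \<noteq> 0"
    and U: "dim_row U = n" "orthonormal_cols U" "col_space U = col_space (subm W 0 0 n L)"
    and Y: "dim_row Y = n" "orthonormal_cols Y" "col_space Y = col_space (W * H)"
  shows "image_mset sin (principal_angles U Y) = singular_values (subm Q m 0 L L)"
proof -
  obtain Z where Z: "Z \<in> carrier_mat n m" "orthonormal_cols Z" "col_space (W * H) = col_space Z"
    "mat_adjoint Z * subm W 0 0 n L = subm Q 0 0 m L"
    using orthonormal_basis_of_block_triangularisation[OF W Q H zero R, of L] by auto
  have "orthonormal_cols (subm W 0 0 n L)"
    using W by (intro orthonormal_cols_subm) auto
  moreover have "U \<in> carrier_mat n (dim_col U)" "Y \<in> carrier_mat n (dim_col Y)"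
    using U(1) Y(1) by auto
  ultimately have "singular_values (mat_adjoint Y * U) = singular_values (mat_adjoint Z * subm W 0 0 n L)"
    using U(2,3) Y(2,3) Z(1-3) by (intro singular_values_adjoint_mult_col_space_cong) auto
  then have "principal_angles U Y = image_mset arccos (singular_values (subm Q 0 0 m L))"
    unfolding principal_angles_def Z(4) by simp
  moreover have "orthonormal_cols Q"
    using Q unfolding orthonormal_cols_def by simp
  then have "mat_adjoint (subm Q 0 0 m L) * subm Q 0 0 m L + mat_adjoint (subm Q m 0 L L) * subm Q m 0 L L
      = 1\<^sub>m L"
    using Q by (intro orthonormal_cols_split_rows) auto
  ultimately show ?thesis
    using sin_arccos_singular_values[of "subm Q 0 0 m L" m L "subm Q m 0 L L"] by simp
qed

section \<open>Embedded block rotations\<close>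

lemma sum_window:
  fixes f :: "nat \<Rightarrow> 'a :: comm_monoid_add"
  assumes "a + w \<le> N" and "\<And>l. l < N \<Longrightarrow> l < a \<or> a + w \<le> l \<Longrightarrow> f l = 0"
  shows "(\<Sum>l<N. f l) = (\<Sum>t<w. f (a + t))"
proof -
  have "(\<Sum>l<N. f l) = (\<Sum>l<a. f l) + ((\<Sum>t<w. f (a + t)) + (\<Sum>t<N - a - w. f (a + (w + t))))"
    using sum_lessThan_add[of f a "N - a"] sum_lessThan_add[of "\<lambda>t. f (a + t)" w "N - a - w"] assms(1)
    by simp
  moreover have "(\<Sum>l<a. f l) = 0" "(\<Sum>t<N - a - w. f (a + (w + t))) = 0"
    using assms by (auto intro!: sum.neutral)
  ultimately show ?thesis
    by simp
qed

lemma embed_rot_carrier [simp]: "embed_rot L m i Om \<in> carrier_mat (m * L) (m * L)"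
  by (simp add: embed_rot_def)

lemma dim_embed_rot [simp]: "dim_row (embed_rot L m i Om) = m * L" "dim_col (embed_rot L m i Om) = m * L"
  by (simp_all add: embed_rot_def)

lemma index_embed_rot:
  assumes "r < m * L" "c < m * L"
  shows "embed_rot L m (Suc k) Om $$ (r, c) =
    (if k * L \<le> r \<and> r < k * L + 2 * L \<and> k * L \<le> c \<and> c < k * L + 2 * L
     then Om $$ (r - k * L, c - k * L) else if r = c then 1 else 0)"
  using assms by (simp add: embed_rot_def algebra_simps)

lemma window_le: "k + 2 \<le> m \<Longrightarrow> k * L + 2 * L \<le> m * (L :: nat)"
  by (metis add_mult_distrib mult_le_mono1)

lemma embed_rot_mult_row_outside:
  assumes Q: "Q \<in> carrier_mat (m * L) q" and r: "r < m * L"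
    and out: "r < k * L \<or> k * L + 2 * L \<le> r" and c: "c < q"
  shows "(embed_rot L m (Suc k) Om * Q) $$ (r, c) = Q $$ (r, c)"
proof -
  have "(embed_rot L m (Suc k) Om * Q) $$ (r, c)
      = (\<Sum>l<m * L. embed_rot L m (Suc k) Om $$ (r, l) * Q $$ (l, c))"
    by (rule index_mult_mat_sum[OF embed_rot_carrier[of L m "Suc k" Om] Q r c])
  also have "\<dots> = (\<Sum>l<m * L. if l = r then Q $$ (l, c) else 0)"
    using r out by (intro sum.cong) (auto simp: index_embed_rot)
  finally show ?thesis
    using r by simp
qed

lemma embed_rot_mult_row_inside:
  assumes km: "k + 2 \<le> m" and Q: "Q \<in> carrier_mat (m * L) q" and s: "s < 2 * L" and c: "c < q"
  shows "(embed_rot L m (Suc k) Om * Q) $$ (k * L + s, c) = (\<Sum>t<2 * L. Om $$ (s, t) * Q $$ (k * L + t, c))"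
proof -
  have win: "k * L + 2 * L \<le> m * L"
    using window_le[OF km] .
  then have r: "k * L + s < m * L"
    using s by simp
  have "(embed_rot L m (Suc k) Om * Q) $$ (k * L + s, c)
      = (\<Sum>l<m * L. embed_rot L m (Suc k) Om $$ (k * L + s, l) * Q $$ (l, c))"
    by (rule index_mult_mat_sum[OF embed_rot_carrier[of L m "Suc k" Om] Q r c])
  also have "\<dots> = (\<Sum>t<2 * L. embed_rot L m (Suc k) Om $$ (k * L + s, k * L + t) * Q $$ (k * L + t, c))"
    using win s by (intro sum_window) (auto simp: index_embed_rot)
  also have "\<dots> = (\<Sum>t<2 * L. Om $$ (s, t) * Q $$ (k * L + t, c))"
    using win s by (intro sum.cong) (auto simp: index_embed_rot)
  finally show ?thesis .
qed

lemma embed_rot_mult: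
  assumes km: "k + 2 \<le> m" and A: "A \<in> carrier_mat (2 * L) (2 * L)" and B: "B \<in> carrier_mat (2 * L) (2 * L)"
  shows "embed_rot L m (Suc k) A * embed_rot L m (Suc k) B = embed_rot L m (Suc k) (A * B)"
proof (rule eq_matI)
  let ?E = "embed_rot L m (Suc k)"
  have win: "k * L + 2 * L \<le> m * L"
    using window_le[OF km] .
  fix r c assume "r < dim_row (?E (A * B))" "c < dim_col (?E (A * B))"
  then have r: "r < m * L" and c: "c < m * L"
    by auto
  show "(?E A * ?E B) $$ (r, c) = ?E (A * B) $$ (r, c)"
  proof (cases "k * L \<le> r \<and> r < k * L + 2 * L")
    case True
    define s where "s = r - k * L"
    have rs: "r = k * L + s" "s < 2 * L"
      using True unfolding s_def by auto
    have "(?E A * ?E B) $$ (r, c) = (\<Sum>t<2 * L. A $$ (s, t) * ?E B $$ (k * L + t, c))"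
      unfolding rs(1) by (rule embed_rot_mult_row_inside[OF km embed_rot_carrier rs(2) c])
    also have "\<dots> = ?E (A * B) $$ (r, c)"
    proof (cases "k * L \<le> c \<and> c < k * L + 2 * L")
      case True
      then have "(\<Sum>t<2 * L. A $$ (s, t) * ?E B $$ (k * L + t, c))
          = (\<Sum>t<2 * L. A $$ (s, t) * B $$ (t, c - k * L))"
        using win c by (intro sum.cong) (auto simp: index_embed_rot)
      also have "\<dots> = (A * B) $$ (s, c - k * L)"
        using True by (intro index_mult_mat_sum[OF A B rs(2), symmetric]) linarith
      finally show ?thesis
        using True rs r c by (simp add: index_embed_rot)
    next
      case False
      then have "(\<Sum>t<2 * L. A $$ (s, t) * ?E B $$ (k * L + t, c)) = 0"
        using win c by (intro sum.neutral) (auto simp: index_embed_rot)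
      moreover have "?E (A * B) $$ (r, c) = 0"
        using False rs r c by (auto simp: index_embed_rot)
      ultimately show ?thesis
        by simp
    qed
    finally show ?thesis .
  next
    case False
    then show ?thesis
      using embed_rot_mult_row_outside[OF embed_rot_carrier r _ c] r c by (auto simp: index_embed_rot)
  qed
qed auto

lemma mat_adjoint_embed_rot:
  assumes "A \<in> carrier_mat (2 * L) (2 * L)"
  shows "mat_adjoint (embed_rot L m (Suc k) A) = embed_rot L m (Suc k) (mat_adjoint A)"
  using assms by (intro eq_matI) (auto simp: index_embed_rot)

lemma embed_rot_one: "embed_rot L m (Suc k) (1\<^sub>m (2 * L)) = 1\<^sub>m (m * L)"
  by (intro eq_matI) (auto simp: index_embed_rot)

lemma embed_rot_unitary:
  assumes "k + 2 \<le> m" "A \<in> carrier_mat (2 * L) (2 * L)" "mat_adjoint A * A = 1\<^sub>m (2 * L)"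
  shows "mat_adjoint (embed_rot L m (Suc k) A) * embed_rot L m (Suc k) A = 1\<^sub>m (m * L)"
  using assms by (simp add: mat_adjoint_embed_rot embed_rot_mult embed_rot_one)

lemma qprod_carrier [simp]: "qprod L Om m k \<in> carrier_mat (m * L) (m * L)"
  by (induction k) (auto intro: mult_carrier_mat[of _ "m * L" "m * L"])

lemma dim_qprod [simp]: "dim_row (qprod L Om m k) = m * L" "dim_col (qprod L Om m k) = m * L"
  using qprod_carrier[of L Om m k] unfolding carrier_mat_def by auto

lemma qprod_unitary:
  assumes "k < m"
    and "\<forall>i\<in>{1..k}. Om i \<in> carrier_mat (2 * L) (2 * L) \<and> mat_adjoint (Om i) * Om i = 1\<^sub>m (2 * L)"
  shows "mat_adjoint (qprod L Om m k) * qprod L Om m k = 1\<^sub>m (m * L)"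
  using assms
proof (induction k)
  case (Suc k)
  let ?E = "embed_rot L m (Suc k) (Om (Suc k))" and ?Q = "qprod L Om m k"
  have "mat_adjoint (?E * ?Q) * (?E * ?Q) = mat_adjoint ?Q * ((mat_adjoint ?E * ?E) * ?Q)"
    by (simp add: mat_adjoint_mult[OF embed_rot_carrier qprod_carrier] mult_assoc_dims)
  also have "mat_adjoint ?E * ?E = 1\<^sub>m (m * L)"
    using Suc.prems by (intro embed_rot_unitary) auto
  also have "mat_adjoint ?Q * (1\<^sub>m (m * L) * ?Q) = 1\<^sub>m (m * L)"
    using Suc by simp
  finally show ?case
    by simp
qed simp

lemma q21_carrier [simp]: "q21 L X \<in> carrier_mat L L"
  by (simp add: q21_def)

lemma q21prod_carrier [simp]: "q21prod L Om k \<in> carrier_mat L L"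
  by (induction k) (auto simp: q21_def)

lemma dim_q21prod [simp]: "dim_row (q21prod L Om k) = L" "dim_col (q21prod L Om k) = L"
  using q21prod_carrier[of L Om k] unfolding carrier_mat_def by auto

lemma qprod_first_block_column:
  assumes "k < m"
  shows "(\<forall>s<L. \<forall>c<L. qprod L Om m k $$ (k * L + s, c) = q21prod L Om k $$ (s, c))
    \<and> (\<forall>r c. (k + 1) * L \<le> r \<longrightarrow> r < m * L \<longrightarrow> c < L \<longrightarrow> qprod L Om m k $$ (r, c) = 0)"
  using assms
proof (induction k)
  case 0
  then have "L \<le> m * L"
    by simp
  then have "\<And>s. s < L \<Longrightarrow> s < m * L"
    by linarith
  then show ?case
    by auto
next
  case (Suc k)
  let ?E = "embed_rot L m (Suc k) (Om (Suc k))" and ?Q = "qprod L Om m k"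
  have km: "k + 2 \<le> m" and Lm: "L \<le> m * L"
    using Suc.prems by auto
  have top: "?Q $$ (k * L + s, c) = q21prod L Om k $$ (s, c)" if "s < L" "c < L" for s c
    using Suc that by auto
  have low: "?Q $$ (r, c) = 0" if "(k + 1) * L \<le> r" "r < m * L" "c < L" for r c
    using Suc that by auto
  have win: "k * L + 2 * L \<le> m * L"
    using window_le[OF km] .
  show ?case
  proof (intro conjI allI impI)
    fix s c assume s: "s < L" and c: "c < L"
    let ?f = "\<lambda>t. Om (Suc k) $$ (L + s, t) * ?Q $$ (k * L + t, c)"
    have "qprod L Om m (Suc k) $$ (Suc k * L + s, c) = (?E * ?Q) $$ (k * L + (L + s), c)"
      by (simp add: algebra_simps)
    also have "\<dots> = (\<Sum>t<2 * L. ?f t)"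
      using s c Lm by (intro embed_rot_mult_row_inside[OF km qprod_carrier]) linarith+
    also have "\<dots> = (\<Sum>t<L + L. ?f t)"
      by (simp add: mult_2)
    also have "\<dots> = (\<Sum>t<L. ?f t) + (\<Sum>t<L. ?f (L + t))"
      by (rule sum_lessThan_add)
    also have "(\<Sum>t<L. ?f (L + t)) = 0"
      using c win by (intro sum.neutral) (auto intro!: low)
    also have "(\<Sum>t<L. ?f t) = (\<Sum>t<L. q21 L (Om (Suc k)) $$ (s, t) * q21prod L Om k $$ (t, c))"
      using s c by (intro sum.cong) (auto simp: top q21_def)
    also have "\<dots> = q21prod L Om (Suc k) $$ (s, c)"
      using index_mult_mat_sum[OF q21_carrier q21prod_carrier s c] by simp
    finally show "qprod L Om m (Suc k) $$ (Suc k * L + s, c) = q21prod L Om (Suc k) $$ (s, c)"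
      by simp
  next
    fix r c assume r: "(Suc k + 1) * L \<le> r" "r < m * L" and c: "c < L"
    have "k * L + 2 * L \<le> r"
      using r(1) by (simp add: algebra_simps)
    then have "qprod L Om m (Suc k) $$ (r, c) = ?Q $$ (r, c)"
      using embed_rot_mult_row_outside[OF qprod_carrier r(2), of k c] c Lm by simp
    then show "qprod L Om m (Suc k) $$ (r, c) = 0"
      using low r c by simp
  qed
qed

lemma subm_qprod_eq_q21prod:
  assumes "k < m"
  shows "subm (qprod L Om m k) (k * L) 0 L L = q21prod L Om k"
proof (rule eq_matI)
  fix s c assume "s < dim_row (q21prod L Om k)" "c < dim_col (q21prod L Om k)"
  then have "s < L" "c < L"
    by simp_all
  then show "subm (qprod L Om m k) (k * L) 0 L L $$ (s, c) = q21prod L Om k $$ (s, c)"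
    using qprod_first_block_column[OF assms] by simp
qed simp_all

theorem mainTheorem10:
  fixes n L j :: nat
    and A B X0 V1 S0 W H :: "complex mat"
    and Om :: "nat \<Rightarrow> complex mat"
  assumes "n \<ge> 1" "L \<ge> 1" "j \<ge> 1"
    and A: "A \<in> carrier_mat n n"
    and B: "B \<in> carrier_mat n L"
    and X0: "X0 \<in> carrier_mat n L"
    and V1: "V1 \<in> carrier_mat n L" "orthonormal_cols V1"
    and S0: "S0 \<in> carrier_mat L L" "upper_triangular S0"
    and QR0: "B - A * X0 = V1 * S0"
    and W: "W \<in> carrier_mat n ((j+1)*L)" "orthonormal_cols W"
    and W1: "subm W 0 0 n L = V1"
    and H: "H \<in> carrier_mat ((j+1)*L) (j*L)"
    and hess: "\<forall>r < (j+1)*L. \<forall>c < j*L. r div L > c div L + 1 \<longrightarrow> H $$ (r,c) = 0"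
    and subdiag: "\<forall>r < (j+1)*L. \<forall>c < j*L. r div L = c div L + 1 \<and> r mod L > c mod L \<longrightarrow> H $$ (r,c) = 0"
    and arnoldi: "A * subm W 0 0 n (j*L) = W * H"
    and fullrank: "\<forall>v \<in> carrier_vec (j*L). H *\<^sub>v v = 0\<^sub>v ((j+1)*L) \<longrightarrow> v = 0\<^sub>v (j*L)"
    and Om: "\<forall>i \<in> {1..j}. Om i \<in> carrier_mat (2*L) (2*L) \<and> unitary_mat (Om i)"
    and blockQR: "\<forall>k \<in> {1..j}.
        subm (qprod L Om (k+1) k * subm H 0 0 ((k+1)*L) (k*L)) (k*L) 0 L (k*L) = 0\<^sub>m L (k*L)
      \<and> upper_triangular (subm (qprod L Om (k+1) k * subm H 0 0 ((k+1)*L) (k*L)) 0 0 (k*L) (k*L))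
      \<and> det (subm (qprod L Om (k+1) k * subm H 0 0 ((k+1)*L) (k*L)) 0 0 (k*L) (k*L)) \<noteq> 0"
    and S0_nonsing: "det S0 \<noteq> 0"
  shows "\<forall>U Y. dim_row U = n \<and> orthonormal_cols U \<and> col_space U = col_space (B - A * X0)
           \<and> dim_row Y = n \<and> orthonormal_cols Y \<and> col_space Y = col_space (A * subm W 0 0 n (j*L))
           \<longrightarrow> image_mset sin (principal_angles U Y) = singular_values (q21prod L Om j)"
proof (intro allI impI)
  \<comment> \<open>Only the unitarity of the rotations and the block triangular form at step \<open>j\<close> matter.\<close>
  fix U Y
  assume UY: "dim_row U = n \<and> orthonormal_cols U \<and> col_space U = col_space (B - A * X0)
    \<and> dim_row Y = n \<and> orthonormal_cols Y \<and> col_space Y = col_space (A * subm W 0 0 n (j*L))"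
  define Qb where "Qb = qprod L Om (j + 1) j"
  have jL: "(j + 1) * L = j * L + L"
    by simp
  have "\<forall>i\<in>{1..j}. Om i \<in> carrier_mat (2 * L) (2 * L) \<and> mat_adjoint (Om i) * Om i = 1\<^sub>m (2 * L)"
    using Om unfolding unitary_mat_def by auto
  then have "mat_adjoint Qb * Qb = 1\<^sub>m ((j + 1) * L)"
    unfolding Qb_def by (intro qprod_unitary) auto
  then have Qb: "Qb \<in> carrier_mat (j * L + L) (j * L + L)" "mat_adjoint Qb * Qb = 1\<^sub>m (j * L + L)"
    using qprod_carrier[of L Om "j + 1" j] unfolding Qb_def jL by auto
  have tri: "subm (Qb * H) (j * L) 0 L (j * L) = 0\<^sub>m L (j * L)"
    "det (subm (Qb * H) 0 0 (j * L) (j * L)) \<noteq> 0"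
    using bspec[OF blockQR, of j] \<open>j \<ge> 1\<close> unfolding subm_whole[OF H] Qb_def by auto
  have "col_space (B - A * X0) = col_space V1"
    using QR0 col_space_mult_invertible[OF V1(1) S0(1) S0_nonsing] by simp
  then have "image_mset sin (principal_angles U Y) = singular_values (subm Qb (j * L) 0 L L)"
    using sin_principal_angles_block_triangularisation[OF W(1)[unfolded jL] W(2) Qb H[unfolded jL] tri]
      UY W1 arnoldi by simp
  also have "subm Qb (j * L) 0 L L = q21prod L Om j"
    unfolding Qb_def by (intro subm_qprod_eq_q21prod) simp
  finally show "image_mset sin (principal_angles U Y) = singular_values (q21prod L Om j)" .
qed

end
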